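(* Let $n$ be a positive integer. (a) If $\lambda^{n/2}>\frac{2\sqrt2\, dC_1}{|\theta|}$, then $\langle k_n\theta\rangle=-\frac{dZ_n}{\theta}$. (b) If $\lambda^{n/2}>2dC_1$, then $\langle k_n\theta^2\rangle=-dY_n$.
   Context: Standing setup: $p,q\in\mathbb{Z}$ are such that $x^3-px-q$ is irreducible over $\mathbb{Q}$ with exactly one real root $\theta$ (one has $3\theta^2-4p>0$ and $3\theta^2-p>0$). $K=\mathbb{Q}(\theta)\subset\mathbb{R}$, $\mathcal{O}_K$ its ring of integers. $d$ is a positive integer with $\mathcal{O}_K\subseteq\frac1d\mathbb{Z}[\theta]$. $\lambda\in\mathcal{O}_K$ is a unit with $\lambda>1$. For $n\ge1$ the rationals $a_n,b_n,c_n$ are defined by $a_n+b_n\theta+c_n\theta^2=\lambda^n$, and $X_n=a_n+pc_n-b_n\theta$, $Y_n=a_n+pc_n-c_n\theta^2$, $Z_n=b_n\theta-c_n\theta^2$, $k_n=dc_n$. Constants: $C_1=\max\{\sqrt2,\ \frac{\sqrt2|\theta|}{\sqrt{3\theta^2-4p}}\}$, $C_2=\frac{\sqrt d}{\sqrt{3\theta^2-p}}$. For $x\in\mathbb{R}$, $\langle x\rangle=x-\lfloor x+\tfrac12\rfloor$ and $\|x\|=|\langle x\rangle|$. *)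

theory Defs
  imports "HOL-Analysis.Analysis" "HOL-Computational_Algebra.Computational_Algebra"
begin

definition alg_int :: "real \<Rightarrow> bool" where
  "alg_int x \<longleftrightarrow> (\<exists>f :: int poly. lead_coeff f = 1 \<and> poly (map_poly of_int f) x = 0)"

text \<open>The number field Q(theta) (theta algebraic, so Q(theta) = Q[theta]).\<close>
definition num_field :: "real \<Rightarrow> real set" where
  "num_field \<theta> = {poly (map_poly of_rat f) \<theta> | f :: rat poly. True}"

definition ring_of_ints :: "real \<Rightarrow> real set" where
  "ring_of_ints \<theta> = {x \<in> num_field \<theta>. alg_int x}"

definition scaled_Z_theta :: "nat \<Rightarrow> real \<Rightarrow> real set" where
  "scaled_Z_theta d \<theta> = {poly (map_poly of_int f) \<theta> / real d | f :: int poly. True}"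

definition is_unit_OK :: "real \<Rightarrow> real \<Rightarrow> bool" where
  "is_unit_OK \<theta> l \<longleftrightarrow> l \<in> ring_of_ints \<theta> \<and> (\<exists>m \<in> ring_of_ints \<theta>. l * m = 1)"

definition signed_frac :: "real \<Rightarrow> real" where
  "signed_frac x = x - of_int \<lfloor>x + 1/2\<rfloor>"

end

(*
  Let \<sigma> be the complex root of x^3 - p x - q with positive imaginary part, so that
  N(x) = x |\<sigma>(x)|^2 is the norm of K.  For x in O_K, d^3 N(x^j) is an integer for all j;
  hence a unit \<lambda> > 0 and its inverse both have norm >= 1, so N(\<lambda>) = 1 and
  |\<sigma>(\<lambda>^n)| = \<lambda>^(-n/2).  Writing \<sigma>(\<lambda>^n) = a + b \<sigma> + c \<sigma>^2, one finds
  Z/\<theta> = 2 Im/\<delta> and Y = Re + (\<theta>/\<delta>) Im with \<delta> = sqrt (3\<theta>^2 - 4p), so both are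
  O(\<lambda>^(-n/2)).  Since d a, d b, d c are integers, k \<theta> = d b - d Z/\<theta> and
  k \<theta>^2 = d (a + p c) - d Y, and once the error terms are below 1/2 they are the signed
  distances to the nearest integer.
*)
theory Submission
  imports Defs "Jordan_Normal_Form.Char_Poly" "HOL-Computational_Algebra.Field_as_Ring"
begin

lemma alg_int_if_int_mat_eigenvalue:
  fixes A :: "int mat"
  assumes A: "A \<in> carrier_mat m m" and ev: "eigenvalue (map_mat of_int A) x"
  shows "alg_int x"
proof -
  have "poly (char_poly (map_mat real_of_int A)) x = 0"
    using eigenvalue_root_char_poly[of "map_mat real_of_int A" m] A ev by simp
  moreover have "char_poly (map_mat of_int A) = map_poly of_int (char_poly A)"
    using of_int_hom.char_poly_hom[OF A] by simp
  moreover have "lead_coeff (char_poly A) = 1"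
    using degree_monic_char_poly[OF A] by simp
  ultimately show ?thesis
    unfolding alg_int_def by metis
qed

lemma alg_int_imp_int_mat_eigenvalue:
  assumes "alg_int x"
  obtains m and A :: "int mat" where "A \<in> carrier_mat m m" "eigenvalue (map_mat of_int A) x"
proof -
  obtain f :: "int poly" where f1: "lead_coeff f = 1" and f0: "poly (map_poly of_int f) x = 0"
    using assms unfolding alg_int_def by blast
  define m where "m = degree f"
  have "m \<noteq> 0"
  proof
    assume "m = 0"
    then have "f = 1" using f1 degree_0_id[of f] unfolding m_def by (simp add: one_pCons)
    then show False using f0 by simp
  qed
  \<comment> \<open>The companion matrix of \<open>f\<close>, with eigenvector \<open>(1, x, \<dots>, x^(m-1))\<close>.\<close>
  define A :: "int mat" where
    "A = mat m m (\<lambda>(i, j). if i + 1 < m then of_bool (j = i + 1) else - coeff f j)"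
  define v :: "real vec" where "v = vec m (\<lambda>j. x ^ j)"
  have A: "A \<in> carrier_mat m m" unfolding A_def by simp
  have last_row: "(\<Sum>j<m. - (real_of_int (coeff f j) * x ^ j)) = x ^ m"
  proof -
    have "0 = (\<Sum>j\<le>m. real_of_int (coeff f j) * x ^ j)"
      using f0 unfolding poly_altdef m_def by (simp add: degree_map_poly)
    also have "\<dots> = (\<Sum>j<m. real_of_int (coeff f j) * x ^ j) + x ^ m"
      using f1 unfolding m_def by (simp add: lessThan_Suc_atMost[symmetric])
    finally show ?thesis by (simp add: sum_negf)
  qed
  have "map_mat of_int A *\<^sub>v v = x \<cdot>\<^sub>v v"
  proof (rule eq_vecI)
    fix i assume "i < dim_vec (x \<cdot>\<^sub>v v)"
    then have i: "i < m" unfolding v_def by simp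
    have "(map_mat of_int A *\<^sub>v v) $ i = (\<Sum>j<m. real_of_int (A $$ (i, j)) * x ^ j)"
      using i A unfolding v_def by (simp add: scalar_prod_def lessThan_atLeast0)
    also have "\<dots> = x ^ (i + 1)"
    proof (cases "i + 1 < m")
      case True
      then have "(\<Sum>j<m. real_of_int (A $$ (i, j)) * x ^ j) = (\<Sum>j<m. if j = i + 1 then x ^ j else 0)"
        using i by (intro sum.cong) (auto simp: A_def)
      then show ?thesis using True by simp
    next
      case False
      then have "(\<Sum>j<m. real_of_int (A $$ (i, j)) * x ^ j) = (\<Sum>j<m. - (real_of_int (coeff f j) * x ^ j))"
        using i by (intro sum.cong) (auto simp: A_def)
      moreover have "i + 1 = m" using False i by simp
      ultimately show ?thesis using last_row by simp
    qed
    finally show "(map_mat of_int A *\<^sub>v v) $ i = (x \<cdot>\<^sub>v v) $ i"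
      using i unfolding v_def by simp
  qed (use A in \<open>simp add: v_def\<close>)
  moreover have "v \<noteq> 0\<^sub>v m"
    using \<open>m \<noteq> 0\<close> by (metis index_zero_vec(1) index_vec not_gr_zero one_neq_zero power_0 v_def)
  ultimately have "eigenvector (map_mat of_int A) v x"
    using A unfolding eigenvector_def by (auto simp: v_def)
  then have "eigenvalue (map_mat of_int A) x"
    unfolding eigenvalue_def by blast
  with A show thesis by (rule that)
qed

lemma alg_int_power:
  assumes "alg_int x"
  shows "alg_int (x ^ k)"
proof -
  obtain m and A :: "int mat" where A: "A \<in> carrier_mat m m" and "eigenvalue (map_mat of_int A) x"
    using alg_int_imp_int_mat_eigenvalue[OF assms] by blast
  then obtain v where v: "eigenvector (map_mat of_int A) v x"
    unfolding eigenvalue_def by blast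
  have A': "map_mat real_of_int A \<in> carrier_mat m m" using A by simp
  have "map_mat of_int (A ^\<^sub>m k) *\<^sub>v v = x ^ k \<cdot>\<^sub>v v"
    using eigenvector_pow[OF A' v] of_int_hom.mat_hom_pow[OF A] by metis
  then have "eigenvector (map_mat of_int (A ^\<^sub>m k)) v (x ^ k)"
    using v A pow_carrier_mat[OF A] unfolding eigenvector_def by auto
  then have "eigenvalue (map_mat of_int (A ^\<^sub>m k)) (x ^ k)"
    unfolding eigenvalue_def by blast
  then show ?thesis
    by (rule alg_int_if_int_mat_eigenvalue[OF pow_carrier_mat[OF A]])
qed

lemma ring_of_ints_power:
  assumes "x \<in> ring_of_ints \<theta>"
  shows "x ^ k \<in> ring_of_ints \<theta>"
proof -
  obtain f where "x = poly (map_poly of_rat f) \<theta>" and "alg_int x"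
    using assms unfolding ring_of_ints_def num_field_def by blast
  interpret map_rat: map_poly_comm_ring_hom "of_rat :: rat \<Rightarrow> real" ..
  from \<open>x = _\<close> have "x ^ k = poly (map_poly of_rat (f ^ k)) \<theta>"
    by (simp add: map_rat.hom_power)
  then show ?thesis
    using alg_int_power[OF \<open>alg_int x\<close>] unfolding ring_of_ints_def num_field_def by blast
qed

lemma poly_of_int_reduce_cubic:
  fixes f :: "int poly" and z :: "'a::comm_ring_1"
  assumes z: "z ^ 3 = of_int p * z + of_int q"
  obtains r0 r1 r2 :: int where "poly (map_poly of_int f) z = of_int r0 + of_int r1 * z + of_int r2 * z\<^sup>2"
proof (induction f arbitrary: thesis rule: pCons_induct)
  case 0
  then show ?case by (metis add_0 map_poly_0 mult_zero_left of_int_0 poly_0)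
next
  case (pCons c f)
  obtain r0 r1 r2 :: int
    where IH: "poly (map_poly of_int f) z = of_int r0 + of_int r1 * z + of_int r2 * z\<^sup>2"
    using pCons.IH by blast
  have "poly (map_poly of_int (pCons c f)) z = of_int c + z * (of_int r0 + of_int r1 * z + of_int r2 * z\<^sup>2)"
    using IH by (simp add: of_int_hom.map_poly_pCons_hom)
  also have "\<dots> = of_int c + of_int r2 * z ^ 3 + of_int r0 * z + of_int r1 * z\<^sup>2"
    by (simp add: algebra_simps power2_eq_square power3_eq_cube)
  also have "\<dots> = of_int (c + r2 * q) + of_int (r0 + r2 * p) * z + of_int r1 * z\<^sup>2"
    unfolding z by (simp add: algebra_simps)
  finally show ?case by (rule pCons.prems)
qed

lemma irreducible_dvd_if_common_root:
  fixes P f :: "rat poly" and x :: "'a::field_char_0"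
  assumes "irreducible P"
    and "poly (map_poly of_rat P) x = 0" and "poly (map_poly of_rat f) x = 0"
  shows "P dvd f"
proof (rule ccontr)
  interpret map_rat: map_poly_comm_ring_hom "of_rat :: rat \<Rightarrow> 'a" ..
  assume "\<not> P dvd f"
  with irreducible_imp_prime_elem[OF assms(1)] have "coprime P f"
    by (rule prime_elem_imp_coprime)
  then have "fst (bezout_coefficients P f) * P + snd (bezout_coefficients P f) * f = 1"
    using bezout_coefficients_fst_snd[of P f] by simp
  then have "poly (map_poly of_rat (fst (bezout_coefficients P f) * P + snd (bezout_coefficients P f) * f)) x = (1::'a)"
    by simp
  with assms(2,3) show False
    by (simp add: map_rat.hom_add map_rat.hom_mult)
qed

lemma of_real_of_rat: "(of_real (of_rat r) :: 'a::real_field) = of_rat r"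
  by (cases r) (simp add: of_rat_rat)

lemma signed_frac_of_int_add:
  assumes "\<bar>e\<bar> < 1/2"
  shows "signed_frac (of_int m + e) = e"
proof -
  have "\<lfloor>of_int m + e + 1/2\<rfloor> = m"
    using assms by (intro floor_unique) auto
  then show ?thesis unfolding signed_frac_def by simp
qed

lemma abs_Re_add_mult_Im_le:
  fixes z :: complex
  shows "\<bar>Re z + t * Im z\<bar> \<le> max (sqrt 2) (sqrt 2 * \<bar>t\<bar>) * cmod z"
proof -
  define M where "M = max (sqrt 2) (sqrt 2 * \<bar>t\<bar>)"
  have "(sqrt 2)\<^sup>2 \<le> M\<^sup>2" "(sqrt 2 * \<bar>t\<bar>)\<^sup>2 \<le> M\<^sup>2"
    by (rule power_mono; simp add: M_def)+
  then have M: "1 + t\<^sup>2 \<le> M\<^sup>2"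
    by (simp add: power_mult_distrib)
  \<comment> \<open>Cauchy--Schwarz: the defect is the square \<open>(t Re z - Im z)\<^sup>2\<close>.\<close>
  have "(Re z + t * Im z)\<^sup>2 \<le> (1 + t\<^sup>2) * (cmod z)\<^sup>2"
    using zero_le_power2[of "t * Re z - Im z"]
    unfolding cmod_power2 by (simp add: power2_eq_square algebra_simps)
  also have "\<dots> \<le> (M * cmod z)\<^sup>2"
    using M by (simp add: power_mult_distrib mult_right_mono)
  finally have "\<bar>Re z + t * Im z\<bar> \<le> \<bar>M * cmod z\<bar>"
    by (simp only: abs_le_square_iff)
  moreover have "M \<ge> 0"
    unfolding M_def by (simp add: le_max_iff_disj)
  ultimately show ?thesis
    by (simp add: abs_mult flip: M_def)
qed

locale real_cubic_field =
  fixes p q :: int and \<theta> :: real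
  assumes irreducible_min_poly: "irreducible [:-(of_int q), -(of_int p), 0, 1 :: rat:]"
    and root: "\<theta>^3 - of_int p * \<theta> - of_int q = 0"
    and unique_real_root: "\<forall>x::real. x^3 - of_int p * x - of_int q = 0 \<longrightarrow> x = \<theta>"
begin

abbreviation min_poly :: "rat poly" where
  "min_poly \<equiv> [:-(of_int q), -(of_int p), 0, 1:]"

lemma theta_cube: "\<theta> ^ 3 = of_int p * \<theta> + of_int q"
  using root by simp

lemma theta_nonzero: "\<theta> \<noteq> 0"
proof
  assume "\<theta> = 0"
  then have "min_poly = [:0, 1:] * [:-(of_int p), 0, 1:]"
    using root by simp
  from irreducibleD[OF irreducible_min_poly this] show False
    by (auto simp: is_unit_iff_degree)
qed

lemma discriminant_pos: "3 * \<theta>\<^sup>2 - 4 * of_int p > 0"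
proof (rule ccontr)
  assume "\<not> 3 * \<theta>\<^sup>2 - 4 * of_int p > 0"
  define s where "s = sqrt (4 * of_int p - 3 * \<theta>\<^sup>2)"
  have s2: "s\<^sup>2 = 4 * of_int p - 3 * \<theta>\<^sup>2"
    unfolding s_def using \<open>\<not> 3 * \<theta>\<^sup>2 - 4 * of_int p > 0\<close> by simp
  \<comment> \<open>Otherwise \<open>(-\<theta> \<plusminus> s)/2\<close> would be further real roots, since
      \<open>x\<^sup>3 - p x - q = (x - \<theta>) (x\<^sup>2 + \<theta> x + \<theta>\<^sup>2 - p)\<close>.\<close>
  have roots: "x ^ 3 - of_int p * x - of_int q = 0" if "2 * x + \<theta> = s \<or> 2 * x + \<theta> = - s" for x
  proof -
    have "(2 * x + \<theta>)\<^sup>2 = s\<^sup>2" using that by auto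
    moreover have "4 * (x\<^sup>2 + \<theta> * x + \<theta>\<^sup>2 - of_int p) = (2 * x + \<theta>)\<^sup>2 + 3 * \<theta>\<^sup>2 - 4 * of_int p"
      by (simp add: power2_eq_square algebra_simps)
    ultimately have "x\<^sup>2 + \<theta> * x + \<theta>\<^sup>2 - of_int p = 0"
      unfolding s2 by simp
    then have "(x - \<theta>) * (x\<^sup>2 + \<theta> * x + \<theta>\<^sup>2 - of_int p) + (\<theta>^3 - of_int p * \<theta> - of_int q) = 0"
      using root by simp
    then show ?thesis by (simp add: algebra_simps power2_eq_square power3_eq_cube)
  qed
  have "(s - \<theta>) / 2 = \<theta>" "(- s - \<theta>) / 2 = \<theta>"
    by (rule unique_real_root[rule_format], rule roots, simp)+
  then show False using theta_nonzero by simp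
qed

definition \<delta> :: real where "\<delta> = sqrt (3 * \<theta>\<^sup>2 - 4 * of_int p)"

lemma delta_pos: "\<delta> > 0"
  unfolding \<delta>_def using discriminant_pos by simp

lemma delta_square: "\<delta>\<^sup>2 = 3 * \<theta>\<^sup>2 - 4 * of_int p"
  unfolding \<delta>_def using discriminant_pos by simp

definition \<sigma> :: complex where "\<sigma> = Complex (- \<theta> / 2) (\<delta> / 2)"

lemma sigma_cube: "\<sigma> ^ 3 = of_int p * \<sigma> + of_int q"
proof -
  have "Re (\<sigma> ^ 3) = (3 * \<theta> * \<delta>\<^sup>2 - \<theta> ^ 3) / 8"
    unfolding \<sigma>_def by (simp add: power3_eq_cube power2_eq_square field_simps)
  also have "\<dots> = (8 * \<theta> ^ 3 - 12 * of_int p * \<theta>) / 8"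
    unfolding delta_square by (simp add: algebra_simps power3_eq_cube power2_eq_square)
  also have "\<dots> = Re (of_int p * \<sigma> + of_int q)"
    unfolding theta_cube by (simp add: \<sigma>_def field_simps)
  finally have "Re (\<sigma> ^ 3) = Re (of_int p * \<sigma> + of_int q)" .
  moreover have "Im (\<sigma> ^ 3) = \<delta> * (3 * \<theta>\<^sup>2 - \<delta>\<^sup>2) / 8"
    unfolding \<sigma>_def by (simp add: power3_eq_cube power2_eq_square field_simps)
  then have "Im (\<sigma> ^ 3) = Im (of_int p * \<sigma> + of_int q)"
    unfolding delta_square by (simp add: \<sigma>_def)
  ultimately show ?thesis by (simp add: complex_eq_iff)
qed

definition real_emb :: "rat poly \<Rightarrow> real" where
  "real_emb f = poly (map_poly of_rat f) \<theta>"

definition complex_emb :: "rat poly \<Rightarrow> complex" where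
  "complex_emb f = poly (map_poly of_rat f) \<sigma>"

lemma real_emb_one [simp]: "real_emb 1 = 1"
  and real_emb_mult [simp]: "real_emb (f * g) = real_emb f * real_emb g"
  and real_emb_power [simp]: "real_emb (f ^ k) = real_emb f ^ k"
  and real_emb_diff [simp]: "real_emb (f - g) = real_emb f - real_emb g"
proof -
  interpret map_rat: map_poly_comm_ring_hom "of_rat :: rat \<Rightarrow> real" ..
  show "real_emb 1 = 1" "real_emb (f * g) = real_emb f * real_emb g"
    "real_emb (f ^ k) = real_emb f ^ k" "real_emb (f - g) = real_emb f - real_emb g"
    unfolding real_emb_def by (simp_all add: map_rat.hom_mult map_rat.hom_power map_rat.hom_minus)
qed

lemma complex_emb_one [simp]: "complex_emb 1 = 1"
  and complex_emb_mult [simp]: "complex_emb (f * g) = complex_emb f * complex_emb g"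
  and complex_emb_power [simp]: "complex_emb (f ^ k) = complex_emb f ^ k"
  and complex_emb_diff [simp]: "complex_emb (f - g) = complex_emb f - complex_emb g"
proof -
  interpret map_rat: map_poly_comm_ring_hom "of_rat :: rat \<Rightarrow> complex" ..
  show "complex_emb 1 = 1" "complex_emb (f * g) = complex_emb f * complex_emb g"
    "complex_emb (f ^ k) = complex_emb f ^ k" "complex_emb (f - g) = complex_emb f - complex_emb g"
    unfolding complex_emb_def by (simp_all add: map_rat.hom_mult map_rat.hom_power map_rat.hom_minus)
qed

lemma real_emb_quadratic: "real_emb [:a, b, c:] = of_rat a + of_rat b * \<theta> + of_rat c * \<theta>\<^sup>2"
  unfolding real_emb_def by (simp add: of_rat_hom.map_poly_pCons_hom algebra_simps power2_eq_square)

lemma complex_emb_quadratic: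
  "complex_emb [:a, b, c:] = of_real (of_rat a) + of_real (of_rat b) * \<sigma> + of_real (of_rat c) * \<sigma>\<^sup>2"
  unfolding complex_emb_def
  by (simp add: of_rat_hom.map_poly_pCons_hom of_real_of_rat algebra_simps power2_eq_square)

lemma min_poly_dvd_if_real_emb_eq_0:
  assumes "real_emb f = 0"
  shows "min_poly dvd f"
proof (rule irreducible_dvd_if_common_root[OF irreducible_min_poly])
  show "poly (map_poly of_rat min_poly) \<theta> = 0"
    using root by (simp add: of_rat_hom.map_poly_pCons_hom of_rat_minus algebra_simps power3_eq_cube)
qed (use assms in \<open>simp add: real_emb_def\<close>)

lemma complex_emb_cong:
  assumes "real_emb f = real_emb g"
  shows "complex_emb f = complex_emb g"
proof -
  obtain h where h: "f - g = min_poly * h"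
    using min_poly_dvd_if_real_emb_eq_0[of "f - g"] assms by auto
  have sigma_root: "complex_emb min_poly = 0"
    using sigma_cube unfolding complex_emb_def
    by (simp add: of_rat_hom.map_poly_pCons_hom of_rat_minus algebra_simps power3_eq_cube)
  have "complex_emb (f - g) = 0"
    by (simp only: h complex_emb_mult sigma_root mult_zero_left)
  then show ?thesis by simp
qed

lemma coords_unique:
  assumes "of_rat a + of_rat b * \<theta> + of_rat c * \<theta>\<^sup>2 = of_rat a' + of_rat b' * \<theta> + of_rat c' * \<theta>\<^sup>2"
  shows "a = a'" "b = b'" "c = c'"
proof -
  define g where "g = [:a - a', b - b', c - c':]"
  have "real_emb g = (of_rat a + of_rat b * \<theta> + of_rat c * \<theta>\<^sup>2) - (of_rat a' + of_rat b' * \<theta> + of_rat c' * \<theta>\<^sup>2)"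
    unfolding g_def real_emb_quadratic by (simp add: of_rat_diff algebra_simps)
  then have "min_poly dvd g"
    using assms by (intro min_poly_dvd_if_real_emb_eq_0) simp
  moreover have "degree g < degree min_poly"
    by (simp add: g_def degree_pCons_eq_if)
  ultimately have "g = 0"
    using dvd_imp_degree_le[of min_poly g] by linarith
  then show "a = a'" "b = b'" "c = c'"
    unfolding g_def by simp_all
qed

lemma Re_quadratic_sigma:
  "Re (of_real A + of_real B * \<sigma> + of_real C * \<sigma>\<^sup>2) = A - B * \<theta> / 2 + C * (\<theta>\<^sup>2 - \<delta>\<^sup>2) / 4"
  unfolding \<sigma>_def by (simp add: power2_eq_square field_simps)

lemma Im_quadratic_sigma:
  "Im (of_real A + of_real B * \<sigma> + of_real C * \<sigma>\<^sup>2) = (B - C * \<theta>) * \<delta> / 2"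
  unfolding \<sigma>_def by (simp add: power2_eq_square field_simps)

lemma norm_form:
  "(A + B * \<theta> + C * \<theta>\<^sup>2) * (cmod (of_real A + of_real B * \<sigma> + of_real C * \<sigma>\<^sup>2))\<^sup>2
     = A * (A + C * of_int p)\<^sup>2 - A * B\<^sup>2 * of_int p - 3 * A * B * C * of_int q
       - B * C\<^sup>2 * of_int p * of_int q + B ^ 3 * of_int q + C ^ 3 * (of_int q)\<^sup>2"
  (is "?lhs = ?N")
proof -
  have "16 * ?lhs = (A + B * \<theta> + C * \<theta>\<^sup>2)
      * ((4 * A - 2 * B * \<theta> + C * (\<theta>\<^sup>2 - \<delta>\<^sup>2))\<^sup>2 + 4 * \<delta>\<^sup>2 * (B - C * \<theta>)\<^sup>2)"
    unfolding cmod_power2 Re_quadratic_sigma Im_quadratic_sigma by (simp add: field_simps power2_eq_square)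
  also have "\<dots> = (A + B * \<theta> + C * \<theta>\<^sup>2)
      * ((4 * A - 2 * B * \<theta> + C * (4 * of_int p - 2 * \<theta>\<^sup>2))\<^sup>2 + 4 * (3 * \<theta>\<^sup>2 - 4 * of_int p) * (B - C * \<theta>)\<^sup>2)"
    unfolding delta_square by simp
  \<comment> \<open>The difference is a multiple of \<open>\<theta>\<^sup>3 - p \<theta> - q = 0\<close>.\<close>
  also have "\<dots> = 16 * ?N + (\<theta> ^ 3 - of_int p * \<theta> - of_int q)
      * (16 * (C ^ 3 * (\<theta> ^ 3 - of_int p * \<theta> + of_int q) - B * C\<^sup>2 * of_int p + B ^ 3 - 3 * A * B * C))"
    by (simp add: algebra_simps power2_eq_square power3_eq_cube)
  finally show ?thesis using root by simp
qed

lemma scaled_Z_theta_coords: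
  assumes "x \<in> scaled_Z_theta d \<theta>"
  obtains \<alpha> \<beta> \<gamma> :: int where "x = (of_int \<alpha> + of_int \<beta> * \<theta> + of_int \<gamma> * \<theta>\<^sup>2) / real d"
proof -
  obtain H :: "int poly" where H: "x = poly (map_poly of_int H) \<theta> / real d"
    using assms unfolding scaled_Z_theta_def by blast
  obtain \<alpha> \<beta> \<gamma> :: int
    where "poly (map_poly of_int H) \<theta> = of_int \<alpha> + of_int \<beta> * \<theta> + of_int \<gamma> * \<theta>\<^sup>2"
    using poly_of_int_reduce_cubic[OF theta_cube] by blast
  with H show thesis by (intro that[of \<alpha> \<beta> \<gamma>]) simp
qed

definition field_norm :: "rat poly \<Rightarrow> real" where
  "field_norm f = real_emb f * (cmod (complex_emb f))\<^sup>2"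

lemma field_norm_one [simp]: "field_norm 1 = 1"
  by (simp add: field_norm_def)

lemma field_norm_mult [simp]: "field_norm (f * g) = field_norm f * field_norm g"
  by (simp add: field_norm_def norm_mult power_mult_distrib ac_simps)

lemma field_norm_power [simp]: "field_norm (f ^ k) = field_norm f ^ k"
  by (simp add: field_norm_def norm_power power_mult_distrib power2_eq_square)

lemma field_norm_cong:
  assumes "real_emb f = real_emb g"
  shows "field_norm f = field_norm g"
  unfolding field_norm_def using assms complex_emb_cong[OF assms] by simp

lemma field_norm_scaled_in_Ints:
  assumes "d > 0" and "real_emb h \<in> scaled_Z_theta d \<theta>"
  shows "real d ^ 3 * field_norm h \<in> \<int>"
proof -
  obtain \<alpha> \<beta> \<gamma> :: int where h: "real_emb h = (of_int \<alpha> + of_int \<beta> * \<theta> + of_int \<gamma> * \<theta>\<^sup>2) / real d"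
    using scaled_Z_theta_coords[OF assms(2)] by blast
  define g where "g = [:of_int \<alpha> / of_nat d, of_int \<beta> / of_nat d, of_int \<gamma> / of_nat d :: rat:]"
  have "real_emb h = real_emb g"
    unfolding h g_def real_emb_quadratic by (simp add: of_rat_divide add_divide_distrib)
  then have "complex_emb h = complex_emb g"
    by (rule complex_emb_cong)
  also have "\<dots> = (of_real (of_int \<alpha>) + of_real (of_int \<beta>) * \<sigma> + of_real (of_int \<gamma>) * \<sigma>\<^sup>2) / of_real (real d)"
    unfolding g_def complex_emb_quadratic by (simp add: of_rat_divide add_divide_distrib)
  finally have "real d ^ 3 * field_norm h
      = (of_int \<alpha> + of_int \<beta> * \<theta> + of_int \<gamma> * \<theta>\<^sup>2)
        * (cmod (of_real (of_int \<alpha>) + of_real (of_int \<beta>) * \<sigma> + of_real (of_int \<gamma>) * \<sigma>\<^sup>2))\<^sup>2"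
    unfolding field_norm_def h using assms(1) by (simp add: norm_divide power2_eq_square power3_eq_cube)
  also have "\<dots> \<in> \<int>"
    unfolding norm_form by simp
  finally show ?thesis .
qed

\<comment> \<open>\<open>d\<^sup>3 N(h\<^sup>j)\<close> is a positive integer for every \<open>j\<close>, so \<open>N(h) < 1\<close> is impossible.\<close>
lemma field_norm_ge_1:
  assumes d: "d > 0" and OK: "ring_of_ints \<theta> \<subseteq> scaled_Z_theta d \<theta>"
    and h: "real_emb h \<in> ring_of_ints \<theta>" and pos: "field_norm h > 0"
  shows "field_norm h \<ge> 1"
proof (rule ccontr)
  assume "\<not> field_norm h \<ge> 1"
  then obtain j where "field_norm h ^ j < 1 / real d ^ 3"
    using real_arch_pow_inv[of "1 / real d ^ 3" "field_norm h"] d by auto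
  then have "real d ^ 3 * field_norm (h ^ j) < 1"
    using d by (simp add: pos_less_divide_eq mult.commute)
  moreover have "real_emb (h ^ j) \<in> scaled_Z_theta d \<theta>"
    unfolding real_emb_power using OK ring_of_ints_power[OF h] by blast
  then have "real d ^ 3 * field_norm (h ^ j) \<in> \<int>"
    by (rule field_norm_scaled_in_Ints[OF d])
  moreover have "real d ^ 3 * field_norm (h ^ j) > 0"
    using d pos by simp
  ultimately show False
    using Ints_nonzero_abs_ge1 by fastforce
qed

lemma ring_of_ints_obtain_poly:
  assumes "x \<in> ring_of_ints \<theta>"
  obtains f where "x = real_emb f"
  using assms unfolding ring_of_ints_def num_field_def real_emb_def by blast

lemma unit_field_norm_eq_1:
  assumes d: "d > 0" and OK: "ring_of_ints \<theta> \<subseteq> scaled_Z_theta d \<theta>"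
    and unit: "is_unit_OK \<theta> (real_emb f)" and pos: "real_emb f > 0"
  shows "field_norm f = 1"
proof -
  obtain m where m: "m \<in> ring_of_ints \<theta>" "real_emb f * m = 1"
    using unit unfolding is_unit_OK_def by blast
  then obtain g where g: "m = real_emb g"
    by (blast elim: ring_of_ints_obtain_poly)
  have "real_emb (f * g) = real_emb 1"
    using m g by simp
  then have conj: "complex_emb f * complex_emb g = 1" and prod: "field_norm f * field_norm g = 1"
    using complex_emb_cong[of "f * g" 1] field_norm_cong[of "f * g" 1] by simp_all
  have "complex_emb f \<noteq> 0" "complex_emb g \<noteq> 0"
    using conj by auto
  moreover have "real_emb g > 0"
    using m g pos zero_less_mult_iff[of "real_emb f" "real_emb g"] by auto
  ultimately have "field_norm f > 0" "field_norm g > 0"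
    using pos unfolding field_norm_def by simp_all
  moreover have "real_emb f \<in> ring_of_ints \<theta>" "real_emb g \<in> ring_of_ints \<theta>"
    using unit m g unfolding is_unit_OK_def by auto
  ultimately have "field_norm f \<ge> 1" "field_norm g \<ge> 1"
    by (simp_all add: field_norm_ge_1[OF d OK])
  moreover have "field_norm f * 1 \<le> field_norm f * field_norm g"
    using calculation by (intro mult_left_mono) auto
  ultimately show ?thesis
    using prod by linarith
qed

lemma unit_power_conj_norm:
  assumes d: "d > 0" and OK: "ring_of_ints \<theta> \<subseteq> scaled_Z_theta d \<theta>"
    and unit: "is_unit_OK \<theta> lam" and pos: "lam > 0"
    and abc: "lam ^ n = of_rat a + of_rat b * \<theta> + of_rat c * \<theta>\<^sup>2"
  shows "cmod (of_real (of_rat a) + of_real (of_rat b) * \<sigma> + of_real (of_rat c) * \<sigma>\<^sup>2) = 1 / sqrt (lam ^ n)"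
proof -
  obtain f where f: "lam = real_emb f"
    using unit unfolding is_unit_OK_def by (blast elim: ring_of_ints_obtain_poly)
  have "real_emb (f ^ n) = real_emb [:a, b, c:]"
    using abc f by (simp add: real_emb_quadratic)
  then have conj: "of_real (of_rat a) + of_real (of_rat b) * \<sigma> + of_real (of_rat c) * \<sigma>\<^sup>2 = complex_emb f ^ n"
    by (metis complex_emb_cong complex_emb_power complex_emb_quadratic)
  have "(cmod (complex_emb f))\<^sup>2 = 1 / lam"
    using unit_field_norm_eq_1[OF d OK] unit pos f by (simp add: field_norm_def field_simps)
  have "(cmod (of_real (of_rat a) + of_real (of_rat b) * \<sigma> + of_real (of_rat c) * \<sigma>\<^sup>2))\<^sup>2
      = ((cmod (complex_emb f))\<^sup>2) ^ n"
    unfolding conj norm_power by (simp only: power2_eq_square power_mult_distrib)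
  also have "\<dots> = 1 / lam ^ n"
    unfolding \<open>(cmod (complex_emb f))\<^sup>2 = 1 / lam\<close> by (simp add: power_one_over)
  finally have "(cmod (of_real (of_rat a) + of_real (of_rat b) * \<sigma> + of_real (of_rat c) * \<sigma>\<^sup>2))\<^sup>2 = 1 / lam ^ n" .
  from real_sqrt_unique[OF this norm_ge_zero] show ?thesis
    by (simp add: real_sqrt_divide)
qed

lemma ring_of_ints_coords_in_Ints:
  assumes d: "d > 0" and OK: "ring_of_ints \<theta> \<subseteq> scaled_Z_theta d \<theta>"
    and "x \<in> ring_of_ints \<theta>" and x: "x = of_rat a + of_rat b * \<theta> + of_rat c * \<theta>\<^sup>2"
  shows "real d * of_rat a \<in> \<int>" "real d * of_rat b \<in> \<int>" "real d * of_rat c \<in> \<int>"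
proof -
  obtain \<alpha> \<beta> \<gamma> :: int where "x = (of_int \<alpha> + of_int \<beta> * \<theta> + of_int \<gamma> * \<theta>\<^sup>2) / real d"
    using assms(3) OK by (blast elim: scaled_Z_theta_coords)
  then have "of_rat a + of_rat b * \<theta> + of_rat c * \<theta>\<^sup>2
      = of_rat (of_int \<alpha> / of_nat d) + of_rat (of_int \<beta> / of_nat d) * \<theta> + of_rat (of_int \<gamma> / of_nat d) * \<theta>\<^sup>2"
    using x by (simp add: of_rat_divide add_divide_distrib)
  from coords_unique[OF this] show "real d * of_rat a \<in> \<int>" "real d * of_rat b \<in> \<int>" "real d * of_rat c \<in> \<int>"
    using d by (simp_all add: of_rat_divide)
qed

lemma signed_frac_theta_if_conj_small:
  assumes "real d * B \<in> \<int>"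
    and small: "4 * real d * cmod (of_real A + of_real B * \<sigma> + of_real C * \<sigma>\<^sup>2) < \<delta>"
  shows "signed_frac (real d * C * \<theta>) = - (real d * (B * \<theta> - C * \<theta>\<^sup>2) / \<theta>)"
proof -
  obtain \<beta> where \<beta>: "real d * B = of_int \<beta>"
    using assms(1) by (metis Ints_cases)
  define \<mu> where "\<mu> = of_real A + of_real B * \<sigma> + of_real C * \<sigma>\<^sup>2"
  have e: "real d * (B * \<theta> - C * \<theta>\<^sup>2) / \<theta> = 2 * real d * Im \<mu> / \<delta>"
    unfolding \<mu>_def Im_quadratic_sigma using theta_nonzero delta_pos by (simp add: field_simps power2_eq_square)
  have "\<bar>2 * real d * Im \<mu> / \<delta>\<bar> \<le> 2 * real d * cmod \<mu> / \<delta>"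
    using delta_pos abs_Im_le_cmod[of \<mu>] by (simp add: abs_mult) (intro divide_right_mono mult_left_mono, auto)
  also have "\<dots> < 1 / 2"
    using small delta_pos unfolding \<mu>_def by (simp add: field_simps)
  finally have "\<bar>- (real d * (B * \<theta> - C * \<theta>\<^sup>2) / \<theta>)\<bar> < 1 / 2"
    unfolding e by simp
  moreover have "real d * C * \<theta> = of_int \<beta> + - (real d * (B * \<theta> - C * \<theta>\<^sup>2) / \<theta>)"
    using \<beta> theta_nonzero by (simp add: field_simps power2_eq_square)
  ultimately show ?thesis
    by (metis signed_frac_of_int_add)
qed

lemma signed_frac_theta_square_if_conj_small:
  assumes "real d * A \<in> \<int>" "real d * C \<in> \<int>"
    and small: "2 * real d * max (sqrt 2) (sqrt 2 * \<bar>\<theta>\<bar> / \<delta>)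
                  * cmod (of_real A + of_real B * \<sigma> + of_real C * \<sigma>\<^sup>2) < 1"
  shows "signed_frac (real d * C * \<theta>\<^sup>2) = - (real d * (A + of_int p * C - C * \<theta>\<^sup>2))"
proof -
  obtain \<alpha> \<gamma> where \<alpha>: "real d * A = of_int \<alpha>" and \<gamma>: "real d * C = of_int \<gamma>"
    using assms(1,2) by (metis Ints_cases)
  define \<mu> where "\<mu> = of_real A + of_real B * \<sigma> + of_real C * \<sigma>\<^sup>2"
  have "A + of_int p * C - C * \<theta>\<^sup>2 = Re \<mu> + \<theta> / \<delta> * Im \<mu>"
    unfolding \<mu>_def Re_quadratic_sigma Im_quadratic_sigma delta_square
    using delta_pos by (simp add: field_simps power2_eq_square)
  then have "\<bar>A + of_int p * C - C * \<theta>\<^sup>2\<bar> \<le> max (sqrt 2) (sqrt 2 * \<bar>\<theta>\<bar> / \<delta>) * cmod \<mu>"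
    using abs_Re_add_mult_Im_le[of \<mu> "\<theta> / \<delta>"] delta_pos by simp
  then have "real d * \<bar>A + of_int p * C - C * \<theta>\<^sup>2\<bar>
      \<le> real d * (max (sqrt 2) (sqrt 2 * \<bar>\<theta>\<bar> / \<delta>) * cmod \<mu>)"
    by (rule mult_left_mono) simp
  then have "\<bar>- (real d * (A + of_int p * C - C * \<theta>\<^sup>2))\<bar> < 1 / 2"
    using small unfolding \<mu>_def by (simp add: abs_mult)
  moreover have "real d * C * \<theta>\<^sup>2
      = real d * A + of_int p * (real d * C) + - (real d * (A + of_int p * C - C * \<theta>\<^sup>2))"
    by (simp add: algebra_simps)
  then have "real d * C * \<theta>\<^sup>2 = of_int (\<alpha> + p * \<gamma>) + - (real d * (A + of_int p * C - C * \<theta>\<^sup>2))"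
    unfolding \<alpha> \<gamma> by simp
  ultimately show ?thesis
    by (metis signed_frac_of_int_add)
qed

end

theorem mainTheorem8:
  fixes p q :: int and \<theta> lam :: real and d n :: nat and a b c :: rat
  assumes irr: "irreducible [:-(of_int q), -(of_int p), 0, 1 :: rat:]"
    and root: "\<theta>^3 - of_int p * \<theta> - of_int q = 0"
    and unique_root: "\<forall>x::real. x^3 - of_int p * x - of_int q = 0 \<longrightarrow> x = \<theta>"
    and d_pos: "d > 0"
    and d_OK: "ring_of_ints \<theta> \<subseteq> scaled_Z_theta d \<theta>"
    and unit: "is_unit_OK \<theta> lam"
    and lam_gt: "lam > 1"
    and n_pos: "n \<ge> 1"
    and abc: "lam^n = of_rat a + of_rat b * \<theta> + of_rat c * \<theta>^2"
  defines "C1 \<equiv> max (sqrt 2) (sqrt 2 * \<bar>\<theta>\<bar> / sqrt (3 * \<theta>^2 - 4 * of_int p))"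
    and "Y \<equiv> of_rat a + of_int p * of_rat c - of_rat c * \<theta>^2"
    and "Z \<equiv> of_rat b * \<theta> - of_rat c * \<theta>^2"
    and "k \<equiv> real d * of_rat c"
  shows "(lam powr (real n / 2) > 2 * sqrt 2 * real d * C1 / \<bar>\<theta>\<bar>
            \<longrightarrow> signed_frac (k * \<theta>) = - (real d * Z / \<theta>))
       \<and> (lam powr (real n / 2) > 2 * real d * C1
            \<longrightarrow> signed_frac (k * \<theta>^2) = - (real d * Y))"
proof -
  interpret real_cubic_field p q \<theta>
    using irr root unique_root by unfold_locales
  have lam_pos: "lam > 0" using lam_gt by simp
  define \<mu> where "\<mu> = of_real (of_rat a) + of_real (of_rat b) * \<sigma> + of_real (of_rat c) * \<sigma>\<^sup>2"
  define L where "L = lam powr (real n / 2)"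
  have "L > 0" unfolding L_def using lam_pos by simp
  have "L = sqrt (lam ^ n)"
    unfolding L_def using lam_pos by (simp add: powr_half_sqrt_powr powr_realpow)
  moreover have "cmod \<mu> = 1 / sqrt (lam ^ n)"
    unfolding \<mu>_def by (rule unit_power_conj_norm[OF d_pos d_OK unit lam_pos abc])
  ultimately have norm_\<mu>: "cmod \<mu> = 1 / L" by simp
  have "lam ^ n \<in> ring_of_ints \<theta>"
    using unit ring_of_ints_power unfolding is_unit_OK_def by blast
  note coords = ring_of_ints_coords_in_Ints[OF d_pos d_OK this abc]
  have C1: "C1 = max (sqrt 2) (sqrt 2 * \<bar>\<theta>\<bar> / \<delta>)"
    unfolding C1_def \<delta>_def ..
  have "C1 \<ge> sqrt 2 * \<bar>\<theta>\<bar> / \<delta>" unfolding C1 by simp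
  show ?thesis
  proof (intro conjI impI)
    assume hyp: "lam powr (real n / 2) > 2 * sqrt 2 * real d * C1 / \<bar>\<theta>\<bar>"
    have "4 * real d / \<delta> = 2 * sqrt 2 * real d * (sqrt 2 * \<bar>\<theta>\<bar> / \<delta>) / \<bar>\<theta>\<bar>"
      using theta_nonzero by (simp add: field_simps)
    also have "\<dots> \<le> 2 * sqrt 2 * real d * C1 / \<bar>\<theta>\<bar>"
      using \<open>C1 \<ge> _\<close> by (intro divide_right_mono mult_left_mono) auto
    finally have "L > 4 * real d / \<delta>"
      using hyp unfolding L_def by simp
    then have "4 * real d * cmod \<mu> < \<delta>"
      unfolding norm_\<mu> using \<open>L > 0\<close> delta_pos by (simp add: field_simps)
    then show "signed_frac (k * \<theta>) = - (real d * Z / \<theta>)"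
      unfolding k_def Z_def \<mu>_def by (intro signed_frac_theta_if_conj_small coords)
  next
    assume "lam powr (real n / 2) > 2 * real d * C1"
    then have "2 * real d * C1 * cmod \<mu> < 1"
      unfolding norm_\<mu> L_def[symmetric] using \<open>L > 0\<close> by (simp add: field_simps)
    then show "signed_frac (k * \<theta>^2) = - (real d * Y)"
      unfolding k_def Y_def \<mu>_def C1 by (intro signed_frac_theta_square_if_conj_small coords)
  qed
qed

end
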